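(* Let $q\ge 2$ be a prime power. For every $a\in\mathbb{F}_q\cup\{q\}$ and every $c\in\mathbb{F}_q$, any two distinct vertices of $\{(a,t,c)_1: t\in\mathbb{F}_q\}$ are at distance at least $6$ in $B'_q$.
   Context: $\mathbb{F}_q$ is the field with $q$ elements; $q$ is also used as a formal symbol not in $\mathbb{F}_q$. $B_q$ is the bipartite graph with parts $\{(x,y,z)_0: x,y,z\in\mathbb{F}_q\}$ and $\{(a,b,c)_1: a,b,c\in\mathbb{F}_q\}$, in which $(a,b,c)_1$ is adjacent exactly to $(j,\,aj+b,\,a^2j+2ab+c)_0$, $j\in\mathbb{F}_q$. $B'_q$ is obtained from $B_q$ by adding $q^2$ new vertices $(q,b,c)_1$, $b,c\in\mathbb{F}_q$, to the second part, where $(q,b,c)_1$ is adjacent exactly to $(c,b,j)_0$, $j\in\mathbb{F}_q$. *)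

theory Defs
  imports Main "HOL-Library.Extended_Nat"
begin

text \<open>The second part is V1 a b c, i.e. (a,b,c)_1, where a = Some a' stands for a' in F_q
  and a = None stands for the formal symbol q.\<close>
datatype 'a vertex = V0 'a 'a 'a | V1 "'a option" 'a 'a

fun adj1 :: "'a::field option \<Rightarrow> 'a \<Rightarrow> 'a \<Rightarrow> 'a \<Rightarrow> 'a \<Rightarrow> 'a \<Rightarrow> bool" where
  "adj1 (Some a) b c x y z =
     (\<exists>j. x = j \<and> y = a * j + b \<and> z = a^2 * j + 2 * a * b + c)"
| "adj1 None b c x y z = (\<exists>j. x = c \<and> y = b \<and> z = j)"

fun Bq'_adj :: "'a::field vertex \<Rightarrow> 'a vertex \<Rightarrow> bool" where
  "Bq'_adj (V1 a b c) (V0 x y z) = adj1 a b c x y z"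
| "Bq'_adj (V0 x y z) (V1 a b c) = adj1 a b c x y z"
| "Bq'_adj _ _ = False"

definition gdist :: "('v \<Rightarrow> 'v \<Rightarrow> bool) \<Rightarrow> 'v \<Rightarrow> 'v \<Rightarrow> enat" where
  "gdist E u v = (INF n \<in> {n. (E ^^ n) u v}. enat n)"

end

theory Submission
  imports Defs
begin

(* B'_q is bipartite with parts V0 and V1, so every walk between two
   second-part vertices has even length; it therefore suffices to exclude walks of
   length 0, 2 and 4 between u = (a,t1,c)_1 and v = (a,t2,c)_1 with t1 \<noteq> t2.
   Length 0 is excluded since u \<noteq> v, length 2 since u and v have no common
   neighbour (their neighbourhoods are disjoint), and length 4 by an algebraic
   uniqueness fact: if two first-part vertices are both adjacent to (a,t1,c)_1 resp.
   (a,t2,c)_1 and both adjacent to one further vertex (a',b,c')_1, then t1 = t2. *)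

lemma walk_length_parity:
  fixes P :: "'v \<Rightarrow> bool"
  assumes colouring: "\<And>x y. E x y \<Longrightarrow> P x \<noteq> P y"
    and walk: "(E ^^ n) u v"
  shows "(P u = P v) = even n"
  using walk
proof (induction n arbitrary: v)
  case 0
  then show ?case by simp
next
  case (Suc n)
  then obtain w where uw: "(E ^^ n) u w" and wv: "E w v" by auto
  have "P w \<noteq> P v" using colouring wv .
  moreover have "(P u = P w) = even n" using Suc.IH uw .
  ultimately show ?case by auto
qed

lemma gdist_lower_bound:
  assumes "\<And>n. n < k \<Longrightarrow> \<not> (E ^^ n) u v"
  shows "enat k \<le> gdist E u v"
  unfolding gdist_def
proof (rule INF_greatest)
  fix n assume "n \<in> {n. (E ^^ n) u v}"
  with assms have "k \<le> n" by (meson CollectD not_less)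
  then show "enat k \<le> enat n" by simp
qed

fun second_part :: "'a vertex \<Rightarrow> bool" where
  "second_part (V0 _ _ _) = False"
| "second_part (V1 _ _ _) = True"

lemma Bq'_adj_bipartite: "Bq'_adj x y \<Longrightarrow> second_part x \<noteq> second_part y"
  by (cases x; cases y) auto

text \<open>The vertices (a,t,c)_1 with t ranging over F_q have pairwise disjoint
  neighbourhoods: a first-part vertex determines t from a and c.\<close>
lemma adj1_determines_middle:
  assumes "adj1 a t1 c x y z" "adj1 a t2 c x y z"
  shows "t1 = t2"
  using assms by (cases a) auto

text \<open>Subtracting
  the equations gives (al-be)(x1-x2) = t2-t1 and (al^2-be^2)(x1-x2) = 2 al (t2-t1),
  whence (be-al)(t2-t1) = 0; if be = al the y-equations force t1 = b = t2.\<close>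
lemma affine_curves_no_quadrilateral:
  fixes al be :: "'a::field"
  assumes p1: "y1 = al*x1 + t1" "y1 = be*x1 + b" "z1 = al^2*x1 + 2*al*t1 + c"
      "z1 = be^2*x1 + 2*be*b + c'"
    and p2: "y2 = al*x2 + t2" "y2 = be*x2 + b" "z2 = al^2*x2 + 2*al*t2 + c"
      "z2 = be^2*x2 + 2*be*b + c'"
  shows "t1 = t2"
proof -
  have lin1: "al*x1 - be*x1 = b - t1" and lin2: "al*x2 - be*x2 = b - t2"
    using p1(1,2) p2(1,2) by (simp_all add: algebra_simps)
  have "(al - be) * (x1 - x2) = (al*x1 - be*x1) - (al*x2 - be*x2)"
    by (simp add: algebra_simps)
  also have "\<dots> = t2 - t1" using lin1 lin2 by simp
  finally have lin: "(al - be) * (x1 - x2) = t2 - t1" .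
  have quad1: "al^2*x1 + 2*al*t1 - be^2*x1 = 2*be*b + c' - c"
    and quad2: "al^2*x2 + 2*al*t2 - be^2*x2 = 2*be*b + c' - c"
    using p1(3,4) p2(3,4) by (simp_all add: algebra_simps)
  have "(al^2 - be^2) * (x1 - x2)
      = (al^2*x1 + 2*al*t1 - be^2*x1) - (al^2*x2 + 2*al*t2 - be^2*x2) + 2*al*(t2 - t1)"
    by (simp add: algebra_simps)
  also have "\<dots> = 2 * al * (t2 - t1)" using quad1 quad2 by simp
  finally have quad: "(al^2 - be^2) * (x1 - x2) = 2 * al * (t2 - t1)" .
  have "(al^2 - be^2) * (x1 - x2) = (al + be) * ((al - be) * (x1 - x2))"
    by (simp add: algebra_simps power2_eq_square)
  with lin quad have "(al + be) * (t2 - t1) = 2 * al * (t2 - t1)" by simp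
  then have "(be - al) * (t2 - t1) = 0" by (simp add: algebra_simps)
  then have "be = al \<or> t1 = t2" by auto
  then show ?thesis using p1(1,2) p2(1,2) by auto
qed

text \<open>The same statement for arbitrary second-part vertices, including the vertices
  (q,b,c)_1; when a or a' is the symbol q the conclusion follows directly from the
  adjacency rule of the new vertices.\<close>
lemma adj1_no_quadrilateral:
  assumes "adj1 a t1 c x1 y1 z1" "adj1 a' b c' x1 y1 z1"
    and "adj1 a' b c' x2 y2 z2" "adj1 a t2 c x2 y2 z2"
  shows "t1 = t2"
  using assms
proof (cases a; cases a')
  fix al be assume "a = Some al" "a' = Some be"
  with assms show ?thesis
    using affine_curves_no_quadrilateral[of y1 al x1 t1 be b z1 c c' y2 x2 t2 z2] by auto
qed auto

text \<open>A 2-walk would pass through a common neighbour, excluded by disjointness.\<close>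
lemma no_walk_length_2:
  assumes "t1 \<noteq> t2"
  shows "\<not> (Bq'_adj ^^ 2) (V1 a t1 c) (V1 a t2 c)"
proof
  assume "(Bq'_adj ^^ 2) (V1 a t1 c) (V1 a t2 c)"
  then obtain w where "Bq'_adj (V1 a t1 c) w" "Bq'_adj w (V1 a t2 c)"
    by (auto simp: numeral_eq_Suc)
  then show False
    using assms adj1_determines_middle by (cases w) fastforce+
qed

text \<open>A 4-walk has the shape V1-V0-V1-V0-V1, which the quadrilateral lemma excludes.\<close>
lemma no_walk_length_4:
  assumes "t1 \<noteq> t2"
  shows "\<not> (Bq'_adj ^^ 4) (V1 a t1 c) (V1 a t2 c)"
proof
  assume "(Bq'_adj ^^ 4) (V1 a t1 c) (V1 a t2 c)"
  then obtain w1 w2 w3 where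
    "Bq'_adj (V1 a t1 c) w1" "Bq'_adj w1 w2" "Bq'_adj w2 w3" "Bq'_adj w3 (V1 a t2 c)"
    by (auto simp: numeral_eq_Suc)
  then obtain x1 y1 z1 x2 y2 z2 a' b c' where
    "adj1 a t1 c x1 y1 z1" "adj1 a' b c' x1 y1 z1"
    "adj1 a' b c' x2 y2 z2" "adj1 a t2 c x2 y2 z2"
    by (cases w1; cases w2; cases w3) auto
  then have "t1 = t2" by (rule adj1_no_quadrilateral)
  with assms show False ..
qed

theorem claim4:
  fixes a :: "'a::{finite,field} option" and c t1 t2 :: "'a"
  assumes "t1 \<noteq> t2"
  shows "gdist Bq'_adj (V1 a t1 c) (V1 a t2 c) \<ge> 6"
proof -
  have no_short_walk: "\<not> (Bq'_adj ^^ n) (V1 a t1 c) (V1 a t2 c)" if "n < 6" for n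
  proof
    assume walk: "(Bq'_adj ^^ n) (V1 a t1 c) (V1 a t2 c)"
    have "second_part (V1 a t1 c) = second_part (V1 a t2 c)" by simp
    then have "even n"
      using walk_length_parity[of Bq'_adj second_part, OF Bq'_adj_bipartite walk] by simp
    with \<open>n < 6\<close> have "n = 0 \<or> n = 2 \<or> n = 4" by presburger
    then consider "n = 0" | "n = 2" | "n = 4" by blast
    then show False
    proof cases
      case 1
      with walk assms show False by simp
    next
      case 2
      with walk no_walk_length_2[OF assms] show False by simp
    next
      case 3
      with walk no_walk_length_4[OF assms] show False by simp
    qed
  qed
  have "enat 6 \<le> gdist Bq'_adj (V1 a t1 c) (V1 a t2 c)"
    by (rule gdist_lower_bound) (rule no_short_walk)
  then show ?thesis by (simp add: numeral_eq_enat)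
qed

end
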